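(* Consider the planar SLAM system $$\dot x = u\,R_\theta e_1,\qquad \dot\theta = u v,\qquad \dot p_i = 0\quad (1\le i\le N),$$ with measurements $z_i = R_{-\theta}(p_i - x)$. For an estimate $(\hat x,\hat\theta,\hat p_1,\dots,\hat p_N)$ let $\hat z_i = R_{-\hat\theta}(\hat p_i-\hat x)$ and let $E = (E_1,\dots,E_N)$ with $E_i = R_{\hat\theta}(\hat z_i - z_i)\in\mathbb R^2$. Let $\mathcal L_\theta:\mathbb R^{2N}\to\mathbb R$ and $\mathcal L_x,\mathcal L_1,\dots,\mathcal L_N:\mathbb R^{2N}\to\mathbb R^2$ be smooth maps vanishing at $0$, and consider the observer $$\dot{\hat\theta} = uv + \mathcal L_\theta(E),\qquad \dot{\hat x} = u R_{\hat\theta}e_1 + \mathcal L_\theta(E)\, e_3\wedge \hat x + \mathcal L_x(E),\qquad \dot{\hat p}_i = \mathcal L_\theta(E)\, e_3\wedge\hat p_i + \mathcal L_i(E).$$ Define the invariant state error $\eta = (\tilde\theta,\tilde x,\tilde p_1,\dots,\tilde p_N)$ by $$\tilde\theta = \hat\theta-\theta,\qquad \tilde x = \hat x - R_{\tilde\theta}x,\qquad \tilde p_i = \hat p_i - R_{\tilde\theta}p_i.$$ Then $E_i = \tilde p_i - \tilde x$ for each $i$, and $\eta$ satisfies the autonomous differential equation $$\dot{\tilde\theta} = \mathcal L_\theta(E),\qquad \dot{\tilde x} = \mathcal L_\theta(E)\,e_3\wedge\tilde x + \mathcal L_x(E),\qquad \dot{\tilde p}_i = \mathcal L_\theta(E)\,e_3\wedge\tilde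 p_i + \mathcal L_i(E),$$ which depends only on $\eta$ (and not on the trajectory, nor on $u(t),v(t)$). In particular, its linearization at $\eta=0$ is the time-invariant linear system $\frac{d}{dt}\delta\eta = LC\,\delta\eta$, where $C$ is the fixed linear map $\delta\eta=(\delta\theta,\delta x,\delta p_1,\dots,\delta p_N)\mapsto(\delta p_1-\delta x,\dots,\delta p_N-\delta x)$ and $L$ is the differential at $0$ of $(\mathcal L_\theta,\mathcal L_x,\mathcal L_1,\dots,\mathcal L_N)$, which can be chosen freely.
   Context: The state is $(x,\theta,p_1,\dots,p_N)$ with $x\in\mathbb R^2$ the vehicle position, $\theta\in\mathbb R$ its heading and $p_i\in\mathbb R^2$ the fixed landmark positions in a common reference frame; $u(t),v(t)\in\mathbb R$ are known scalar inputs. $e_1=(1,0)^T$, $R_\theta$ is the $2\times2$ rotation matrix of angle $\theta$. For a planar vector $w=(a,b)^T$, $e_3\wedge w$ denotes the planar vector $(-b,a)^T$ (cross product with the vertical unit vector $e_3$, restricted to the plane). *)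

theory Defs
  imports "HOL-Analysis.Analysis"
begin

definition rot :: "real \<Rightarrow> real^2 \<Rightarrow> real^2" where
  "rot a w = vector [cos a * w$1 - sin a * w$2, sin a * w$1 + cos a * w$2]"

definition e1 :: "real^2" where
  "e1 = vector [1, 0]"

definition e3wedge :: "real^2 \<Rightarrow> real^2" where
  "e3wedge w = vector [- (w$2), w$1]"

definition meas :: "real \<Rightarrow> real^2 \<Rightarrow> real^2 \<Rightarrow> real^2" where
  "meas th x p = rot (- th) (p - x)"

definition innov :: "real \<Rightarrow> real^2 \<Rightarrow> (real^2)^'n \<Rightarrow> real \<Rightarrow> real^2 \<Rightarrow> (real^2)^'n \<Rightarrow> (real^2)^'n" where
  "innov thh xh ph th x p = (\<chi> i. rot thh (meas thh xh (ph$i) - meas th x (p$i)))"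

definition outC :: "real \<times> (real^2) \<times> ((real^2)^'n) \<Rightarrow> (real^2)^'n" where
  "outC eta = (\<chi> i. (snd (snd eta))$i - fst (snd eta))"

definition err_field ::
  "((real^2)^'n \<Rightarrow> real) \<Rightarrow> ((real^2)^'n \<Rightarrow> real^2) \<Rightarrow> ('n \<Rightarrow> (real^2)^'n \<Rightarrow> real^2)
   \<Rightarrow> real \<times> (real^2) \<times> ((real^2)^'n) \<Rightarrow> real \<times> (real^2) \<times> ((real^2)^'n)" where
  "err_field Lth Lx Lp eta =
     (let E = outC eta; xt = fst (snd eta); pt = snd (snd eta) in
       (Lth E, Lth E *\<^sub>R e3wedge xt + Lx E, \<chi> i. Lth E *\<^sub>R e3wedge (pt$i) + Lp i E))"

definition gain_map ::
  "((real^2)^'n \<Rightarrow> real) \<Rightarrow> ((real^2)^'n \<Rightarrow> real^2) \<Rightarrow> ('n \<Rightarrow> (real^2)^'n \<Rightarrow> real^2)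
   \<Rightarrow> (real^2)^'n \<Rightarrow> real \<times> (real^2) \<times> ((real^2)^'n)" where
  "gain_map Lth Lx Lp E = (Lth E, Lx E, \<chi> i. Lp i E)"

end

theory Submission
  imports Defs
begin

(* Rotations form a one-parameter group generated by the quarter turn e3wedge
   (Euler form R_a = cos a + sin a J with J = e3wedge, J^2 = -1), so the derivative of a
   rotated moving vector R_a(t) w(t) is R_a w' + a' J (R_a w).  From this a single
   transport lemma shows that the error yh - R_a y between an estimated quantity and
   its rotated true value obeys a differential equation in which the true velocity
   has cancelled; it is applied to the vehicle position (where R_a maps the true
   velocity direction onto the estimated one) and to each fixed landmark, with
   a = thh - th.  The innovation is the output map C applied to the error, so the
   error equation is autonomous (inv_error_dynamics).  Finally the error field is
   split as gain_map o C plus L_theta o C times an infinitesimal rotation, a term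
   quadratic at 0, whence its linearisation at 0 is L o C. *)

lemma vec2_eqI: "(a::real^2)$1 = b$1 \<Longrightarrow> a$2 = b$2 \<Longrightarrow> a = b"
  by (simp add: vec_eq_iff forall_2)

lemma linear_rot: "linear (rot a)"
  by (rule linearI; rule vec2_eqI) (simp_all add: rot_def algebra_simps)

lemma linear_e3wedge: "linear e3wedge"
  by (rule linearI; rule vec2_eqI) (simp_all add: e3wedge_def)

lemma bounded_linear_e3wedge: "bounded_linear e3wedge"
  using linear_e3wedge by (simp add: linear_conv_bounded_linear)

lemmas rot_linear_simps =
  linear_diff[OF linear_rot] linear_add[OF linear_rot] linear_scale[OF linear_rot]
  linear_0[OF linear_rot]
lemmas e3wedge_linear_simps =
  linear_diff[OF linear_e3wedge] linear_add[OF linear_e3wedge] linear_scale[OF linear_e3wedge]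
  linear_0[OF linear_e3wedge]

lemma rot_rot: "rot a (rot b w) = rot (a + b) w"
  by (rule vec2_eqI) (simp_all add: rot_def cos_add sin_add algebra_simps)

lemma rot_zero: "rot 0 w = w"
  by (rule vec2_eqI) (simp_all add: rot_def)

lemma rot_euler: "rot a w = cos a *\<^sub>R w + sin a *\<^sub>R e3wedge w"
  by (rule vec2_eqI) (simp_all add: rot_def e3wedge_def algebra_simps)

lemma e3wedge_e3wedge: "e3wedge (e3wedge w) = - w"
  by (rule vec2_eqI) (simp_all add: e3wedge_def)

lemma has_vector_derivative_rot:
  assumes a: "(a has_real_derivative a') (at t)"
    and w: "(w has_vector_derivative w') (at t)"
  shows "((\<lambda>t. rot (a t) (w t)) has_vector_derivative
           rot (a t) w' + a' *\<^sub>R e3wedge (rot (a t) (w t))) (at t)"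
proof -
  have Jw: "((\<lambda>t. e3wedge (w t)) has_vector_derivative e3wedge w') (at t)"
    by (rule bounded_linear.has_vector_derivative[OF bounded_linear_e3wedge w])
  have cos: "((\<lambda>t. cos (a t)) has_real_derivative - sin (a t) * a') (at t)"
    and sin: "((\<lambda>t. sin (a t)) has_real_derivative cos (a t) * a') (at t)"
    by (rule DERIV_fun_cos[OF a], rule DERIV_fun_sin[OF a])
  have euler: "((\<lambda>t. cos (a t) *\<^sub>R w t + sin (a t) *\<^sub>R e3wedge (w t)) has_vector_derivative
          cos (a t) *\<^sub>R w' + (- sin (a t) * a') *\<^sub>R w t
          + (sin (a t) *\<^sub>R e3wedge w' + (cos (a t) * a') *\<^sub>R e3wedge (w t))) (at t)"
    by (intro has_vector_derivative_add has_vector_derivative_scaleR w Jw cos sin)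
  have regroup: "cos (a t) *\<^sub>R w' + (- sin (a t) * a') *\<^sub>R w t
          + (sin (a t) *\<^sub>R e3wedge w' + (cos (a t) * a') *\<^sub>R e3wedge (w t))
        = rot (a t) w' + a' *\<^sub>R e3wedge (rot (a t) (w t))"
    by (simp add: rot_euler e3wedge_linear_simps e3wedge_e3wedge algebra_simps)
  have "(\<lambda>t. rot (a t) (w t)) = (\<lambda>t. cos (a t) *\<^sub>R w t + sin (a t) *\<^sub>R e3wedge (w t))"
    by (simp add: rot_euler)
  then show ?thesis
    using euler[unfolded regroup] by simp
qed

lemma has_derivative_vec_lambda:
  fixes g :: "'n::finite \<Rightarrow> 'a::real_normed_vector \<Rightarrow> 'b::euclidean_space"
  assumes "\<And>i. (g i has_derivative g' i) (at a within S)"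
  shows "((\<lambda>x. \<chi> i. g i x) has_derivative (\<lambda>h. \<chi> i. g' i h)) (at a within S)"
  unfolding has_derivative_componentwise_within[where f = "\<lambda>x. \<chi> i. g i x"]
  using assms by (auto simp: Basis_vec_def inner_axis has_derivative_componentwise_within[symmetric])

lemma has_vector_derivative_vec_lambda:
  fixes g :: "'n::finite \<Rightarrow> real \<Rightarrow> 'b::euclidean_space"
  assumes "\<And>i. (g i has_vector_derivative g' i) (at t)"
  shows "((\<lambda>t. \<chi> i. g i t) has_vector_derivative (\<chi> i. g' i)) (at t)"
proof -
  have "(\<lambda>h. \<chi> i. h *\<^sub>R g' i) = (\<lambda>h. h *\<^sub>R (\<chi> i. g' i))"
    by (simp add: fun_eq_iff vec_eq_iff)
  then show ?thesis
    using has_derivative_vec_lambda[of g "\<lambda>i h. h *\<^sub>R g' i"] assms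
    by (simp add: has_vector_derivative_def)
qed

definition inv_error ::
  "real \<Rightarrow> real^2 \<Rightarrow> (real^2)^'n \<Rightarrow> real \<Rightarrow> real^2 \<Rightarrow> (real^2)^'n
   \<Rightarrow> real \<times> (real^2) \<times> ((real^2)^'n)" where
  "inv_error thh xh ph th x p =
     (thh - th, xh - rot (thh - th) x, \<chi> i. ph $ i - rot (thh - th) (p $ i))"

lemma innov_inv_error: "innov thh xh ph th x p = outC (inv_error thh xh ph th x p)"
  by (simp add: innov_def meas_def outC_def inv_error_def vec_eq_iff
      rot_linear_simps rot_rot rot_zero algebra_simps)

lemma has_vector_derivative_rotated_error:
  assumes a: "(a has_real_derivative l) (at t)"
    and y: "(y has_vector_derivative w) (at t)"
    and yh: "(yh has_vector_derivative rot (a t) w + l *\<^sub>R e3wedge (yh t) + k) (at t)"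
  shows "((\<lambda>t. yh t - rot (a t) (y t)) has_vector_derivative
           l *\<^sub>R e3wedge (yh t - rot (a t) (y t)) + k) (at t)"
  using has_vector_derivative_diff[OF yh has_vector_derivative_rot[OF a y]]
  by (simp add: e3wedge_linear_simps algebra_simps)

lemma inv_error_dynamics:
  fixes x xh :: "real \<Rightarrow> real^2" and th thh u v :: "real \<Rightarrow> real"
    and p :: "(real^2)^'n" and ph :: "real \<Rightarrow> (real^2)^'n"
  defines "E \<equiv> \<lambda>t. innov (thh t) (xh t) (ph t) (th t) (x t) p"
  assumes sys_x: "(x has_vector_derivative (u t *\<^sub>R rot (th t) e1)) (at t)"
    and sys_th: "(th has_vector_derivative (u t * v t)) (at t)"
    and obs_th: "(thh has_vector_derivative (u t * v t + Lth (E t))) (at t)"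
    and obs_x: "(xh has_vector_derivative
                  (u t *\<^sub>R rot (thh t) e1 + Lth (E t) *\<^sub>R e3wedge (xh t) + Lx (E t))) (at t)"
    and obs_p: "(ph has_vector_derivative
                  (\<chi> i. Lth (E t) *\<^sub>R e3wedge (ph t $ i) + Lp i (E t))) (at t)"
  shows "((\<lambda>t. inv_error (thh t) (xh t) (ph t) (th t) (x t) p) has_vector_derivative
           err_field Lth Lx Lp (inv_error (thh t) (xh t) (ph t) (th t) (x t) p)) (at t)"
proof -
  let ?a = "\<lambda>t. thh t - th t"
  have angle: "(?a has_real_derivative Lth (E t)) (at t)"
    using has_vector_derivative_diff[OF obs_th sys_th]
    by (simp add: has_real_derivative_iff_has_vector_derivative)
  have "rot (?a t) (u t *\<^sub>R rot (th t) e1) = u t *\<^sub>R rot (thh t) e1"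
    by (simp add: rot_linear_simps rot_rot)
  then have position: "((\<lambda>t. xh t - rot (?a t) (x t)) has_vector_derivative
      Lth (E t) *\<^sub>R e3wedge (xh t - rot (?a t) (x t)) + Lx (E t)) (at t)"
    using obs_x by (intro has_vector_derivative_rotated_error[OF angle sys_x]) simp
  have landmark: "((\<lambda>t. ph t $ i - rot (?a t) (p $ i)) has_vector_derivative
      Lth (E t) *\<^sub>R e3wedge (ph t $ i - rot (?a t) (p $ i)) + Lp i (E t)) (at t)" for i
    using bounded_linear.has_vector_derivative[OF bounded_linear_vec_nth obs_p, of i]
    by (intro has_vector_derivative_rotated_error[OF angle has_vector_derivative_const])
      (simp add: rot_linear_simps)
  have "E t = outC (inv_error (thh t) (xh t) (ph t) (th t) (x t) p)"
    by (simp add: E_def innov_inv_error)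
  then show ?thesis
    unfolding inv_error_def
    using has_vector_derivative_Pair[OF angle[unfolded has_real_derivative_iff_has_vector_derivative]
        has_vector_derivative_Pair[OF position has_vector_derivative_vec_lambda[OF landmark]]]
    by (simp add: err_field_def Let_def inv_error_def)
qed

lemma bounded_linear_outC: "bounded_linear (outC :: real \<times> (real^2) \<times> ((real^2)^'n) \<Rightarrow> (real^2)^'n)"
proof -
  have "linear (outC :: real \<times> (real^2) \<times> ((real^2)^'n) \<Rightarrow> (real^2)^'n)"
    by (rule linearI) (simp_all add: outC_def vec_eq_iff algebra_simps)
  then show ?thesis by (simp add: linear_conv_bounded_linear)
qed

definition rot_generator ::
  "real \<times> (real^2) \<times> ((real^2)^'n) \<Rightarrow> real \<times> (real^2) \<times> ((real^2)^'n)" where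
  "rot_generator d = (0, e3wedge (fst (snd d)), \<chi> i. e3wedge (snd (snd d) $ i))"

lemma bounded_linear_rot_generator: "bounded_linear rot_generator"
proof -
  have "linear rot_generator"
    by (rule linearI) (simp_all add: rot_generator_def vec_eq_iff e3wedge_linear_simps)
  then show ?thesis by (simp add: linear_conv_bounded_linear)
qed

text \<open>The error field is the gain composed with C, plus L_theta(C d) times a rotation of d;
  the second term is quadratic at the origin.\<close>
lemma err_field_split:
  "err_field Lth Lx Lp d = gain_map Lth Lx Lp (outC d) + Lth (outC d) *\<^sub>R rot_generator d"
  by (simp add: err_field_def gain_map_def rot_generator_def Let_def vec_eq_iff)

lemma err_field_zero:
  fixes Lth :: "(real^2)^'n \<Rightarrow> real"
  assumes "Lth 0 = 0" "Lx 0 = 0" "\<And>i. Lp i 0 = 0"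
  shows "err_field Lth Lx Lp 0 = 0"
proof -
  have "outC (0 :: real \<times> (real^2) \<times> ((real^2)^'n)) = 0"
    by (rule linear_0[OF bounded_linear.linear[OF bounded_linear_outC]])
  with assms show ?thesis
    by (simp add: err_field_split gain_map_def) (simp add: zero_prod_def zero_vec_def)
qed

lemma err_field_linearisation:
  fixes Lth :: "(real^2)^'n \<Rightarrow> real"
  assumes Lth0: "Lth 0 = 0"
    and gain: "(gain_map Lth Lx Lp has_derivative L) (at 0)"
  shows "(err_field Lth Lx Lp has_derivative (\<lambda>d. L (outC d))) (at 0)"
proof -
  have C0: "outC (0 :: real \<times> (real^2) \<times> ((real^2)^'n)) = 0"
    by (rule linear_0[OF bounded_linear.linear[OF bounded_linear_outC]])
  have linear_part: "((\<lambda>d. gain_map Lth Lx Lp (outC d)) has_derivative (\<lambda>d. L (outC d))) (at 0)"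
    using diff_chain_at[OF bounded_linear_imp_has_derivative[OF bounded_linear_outC],
        of "gain_map Lth Lx Lp" L 0] C0 gain
    by (simp add: o_def)
  then have "((\<lambda>d. Lth (outC d)) has_derivative (\<lambda>d. fst (L (outC d)))) (at 0)"
    using has_derivative_fst by (fastforce simp: gain_map_def)
  note product = has_derivative_scaleR[OF this
      bounded_linear_imp_has_derivative[OF bounded_linear_rot_generator]]
  have G0: "rot_generator (0 :: real \<times> (real^2) \<times> ((real^2)^'n)) = 0"
    by (rule linear_0[OF bounded_linear.linear[OF bounded_linear_rot_generator]])
  from product have "((\<lambda>d. Lth (outC d) *\<^sub>R rot_generator d) has_derivative (\<lambda>h. 0)) (at 0)"
    by (simp add: C0 Lth0 G0)
  from has_derivative_add[OF linear_part this] show ?thesis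
    by (simp add: err_field_split[abs_def])
qed

theorem mainTheorem2:
  fixes x xh :: "real \<Rightarrow> real^2" and th thh u v :: "real \<Rightarrow> real"
    and p :: "(real^2)^'n" and ph :: "real \<Rightarrow> (real^2)^'n"
    and Lth :: "(real^2)^'n \<Rightarrow> real" and Lx :: "(real^2)^'n \<Rightarrow> real^2"
    and Lp :: "'n \<Rightarrow> (real^2)^'n \<Rightarrow> real^2"
  assumes Lth_diff: "\<And>E. Lth differentiable (at E)"
    and Lx_diff: "\<And>E. Lx differentiable (at E)"
    and Lp_diff: "\<And>i E. Lp i differentiable (at E)"
    and Lth0: "Lth 0 = 0" and Lx0: "Lx 0 = 0" and Lp0: "\<And>i. Lp i 0 = 0"
    and sys_x: "\<And>t. (x has_vector_derivative (u t *\<^sub>R rot (th t) e1)) (at t)"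
    and sys_th: "\<And>t. (th has_vector_derivative (u t * v t)) (at t)"
    and obs_th: "\<And>t. (thh has_vector_derivative
                    (u t * v t + Lth (innov (thh t) (xh t) (ph t) (th t) (x t) p))) (at t)"
    and obs_x: "\<And>t. (xh has_vector_derivative
                    (u t *\<^sub>R rot (thh t) e1
                     + Lth (innov (thh t) (xh t) (ph t) (th t) (x t) p) *\<^sub>R e3wedge (xh t)
                     + Lx (innov (thh t) (xh t) (ph t) (th t) (x t) p))) (at t)"
    and obs_p: "\<And>t. (ph has_vector_derivative
                    (\<chi> i. Lth (innov (thh t) (xh t) (ph t) (th t) (x t) p) *\<^sub>R e3wedge (ph t $ i)
                          + Lp i (innov (thh t) (xh t) (ph t) (th t) (x t) p))) (at t)"
  defines "eta \<equiv> (\<lambda>t. (thh t - th t,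
                         xh t - rot (thh t - th t) (x t),
                         \<chi> i. ph t $ i - rot (thh t - th t) (p $ i)))"
  shows "(\<forall>t i. innov (thh t) (xh t) (ph t) (th t) (x t) p $ i
                  = snd (snd (eta t)) $ i - fst (snd (eta t)))
       \<and> (\<forall>t. (eta has_vector_derivative err_field Lth Lx Lp (eta t)) (at t))
       \<and> err_field Lth Lx Lp 0 = 0
       \<and> (\<forall>L. (gain_map Lth Lx Lp has_derivative L) (at 0) \<longrightarrow>
              (err_field Lth Lx Lp has_derivative (\<lambda>d. L (outC d))) (at 0))"
proof -
  have eta_eq: "eta t = inv_error (thh t) (xh t) (ph t) (th t) (x t) p" for t
    by (simp add: eta_def inv_error_def)
  have innovation: "innov (thh t) (xh t) (ph t) (th t) (x t) p $ i
      = snd (snd (eta t)) $ i - fst (snd (eta t))" for t i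
    by (simp add: eta_eq innov_inv_error outC_def)
  have dynamics: "(eta has_vector_derivative err_field Lth Lx Lp (eta t)) (at t)" for t
    unfolding eta_eq[abs_def] using sys_x sys_th obs_th obs_x obs_p
    by (rule inv_error_dynamics)
  have equilibrium: "err_field Lth Lx Lp 0 = 0"
    using Lth0 Lx0 Lp0 by (rule err_field_zero)
  show ?thesis
    using innovation dynamics equilibrium err_field_linearisation[of Lth, OF Lth0] by blast
qed

end
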